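(* Let $n\in\mathbb N$, let $\lambda$ be an eigenvalue of $\mathfrak P^{(n)}_3+\mathfrak P^{(n)}_4$, and let $e\in\mathbb R^n$ be a corresponding unit eigenvector. (i) If $\lambda\ne1-\frac1n$, then $\langle e,\mathfrak P^{(n)}_1e\rangle=\langle e,\mathfrak P^{(n)}_2e\rangle=1-\frac1{2n}-\frac\lambda2$. (ii) If $\lambda=1-\frac1n$, then $\langle e,\mathfrak P^{(n)}_1e\rangle=0$ and $\langle e,\mathfrak P^{(n)}_2e\rangle=1$ when $n$ is even, while $\langle e,\mathfrak P^{(n)}_1e\rangle=1$ and $\langle e,\mathfrak P^{(n)}_2e\rangle=0$ when $n$ is odd.
   Context: For $n\in\mathbb N$, $\mathfrak P^{(n)}_1,\dots,\mathfrak P^{(n)}_4\in M_n(\mathbb R)$ denote orthogonal projections (real symmetric idempotent matrices) such that (i) $\mathfrak P^{(n)}_1+\dots+\mathfrak P^{(n)}_4=(2-\frac1n)I_n$; (ii) $\operatorname{rk}\mathfrak P^{(n)}_1=\lfloor\frac n2\rfloor-(-1)^n$ and $\operatorname{rk}\mathfrak P^{(n)}_i=\lfloor\frac n2\rfloor$ for $i=2,3,4$; (iii) the only subspaces of $\mathbb C^n$ invariant under all four matrices are $0$ and $\mathbb C^n$. Such quadruples exist for every $n$, and any two of them are simultaneously unitarily equivalent; moreover, any quadruple of orthogonal projections on a Hilbert space summing to $(2-\frac1n)I$ with no nontrivial common invariant closed subspace is unitarily equivalent to one of the four cyclic shifts $(\mathfrak P^{(n)}_{\sigma(1)},\dots,\mathfrak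 P^{(n)}_{\sigma(4)})$, $\sigma$ a power of the cycle $(1\,2\,3\,4)$, and these four are pairwise inequivalent. *)

theory Defs
  imports "HOL-Analysis.Analysis"
begin

definition orth_proj :: "real^'n^'n \<Rightarrow> bool" where
  "orth_proj P \<longleftrightarrow> transpose P = P \<and> P ** P = P"

definition cmat :: "real^'n^'m \<Rightarrow> complex^'n^'m" where
  "cmat A = (\<chi> i j. complex_of_real (A $ i $ j))"

definition csubspace :: "(complex^'n) set \<Rightarrow> bool" where
  "csubspace V \<longleftrightarrow> 0 \<in> V \<and> (\<forall>x\<in>V. \<forall>y\<in>V. x + y \<in> V) \<and> (\<forall>c::complex. \<forall>x\<in>V. c *s x \<in> V)"

text \<open>The quadruple satisfies conditions (i)-(iii) defining the P^(n), n = CARD('n).\<close>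
definition frakP_quadruple :: "real^'n^'n \<Rightarrow> real^'n^'n \<Rightarrow> real^'n^'n \<Rightarrow> real^'n^'n \<Rightarrow> bool" where
  "frakP_quadruple P1 P2 P3 P4 \<longleftrightarrow>
     orth_proj P1 \<and> orth_proj P2 \<and> orth_proj P3 \<and> orth_proj P4 \<and>
     P1 + P2 + P3 + P4 = (2 - 1 / real CARD('n)) *\<^sub>R mat 1 \<and>
     int (rank P1) = int CARD('n) div 2 - (-1) ^ CARD('n) \<and>
     rank P2 = CARD('n) div 2 \<and> rank P3 = CARD('n) div 2 \<and> rank P4 = CARD('n) div 2 \<and>
     (\<forall>V. csubspace V \<and> (\<forall>P\<in>{P1, P2, P3, P4}. \<forall>x\<in>V. cmat P *v x \<in> V)
          \<longrightarrow> V = {0} \<or> V = UNIV)"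

end

theory Submission
  imports Defs
begin

text \<open>
  Write \<open>a = P\<^sub>1 e\<close>, \<open>b = P\<^sub>2 e\<close>. By the sum condition, \<open>P\<^sub>1 + P\<^sub>2\<close> acts on \<open>e\<close> as
  \<open>\<mu> = 2 - 1/n - \<lambda>\<close>, and idempotency gives \<open>P\<^sub>1 b = (\<mu> - 1) a\<close>, \<open>P\<^sub>2 a = (\<mu> - 1) b\<close>;
  hence \<open>(\<mu> - 1)\<langle>e, a\<rangle> = \<langle>a, b\<rangle> = (\<mu> - 1)\<langle>e, b\<rangle>\<close>, which is part (i) when \<open>\<mu> \<noteq> 1\<close>.

  For \<open>\<mu> = 1\<close>, \<open>e = a + b\<close> with \<open>a\<close> fixed by \<open>P\<^sub>1\<close> and killed by \<open>P\<^sub>2\<close>, and symmetrically for \<open>b\<close>.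
  Starting from such a nonzero seed \<open>u\<close> and applying \<open>P\<^sub>3 - P\<^sub>4\<close> and \<open>P\<^sub>1 - P\<^sub>2\<close> alternately
  gives a chain of eigenvectors of \<open>P\<^sub>1 + P\<^sub>2\<close> with pairwise distinct eigenvalues. Their span is
  invariant under all four projections, hence is everything by irreducibility, so the first \<open>n\<close>
  of them are nonzero and mutually orthogonal. Applying \<open>P\<^sub>1\<close> to the even-indexed ones yields
  \<open>\<lfloor>(n-1)/2\<rfloor> + 1\<close> orthogonal vectors in the range of \<open>P\<^sub>1\<close>, which the rank conditions forbid
  for \<open>P\<^sub>1\<close> when \<open>n\<close> is even and for \<open>P\<^sub>2\<close> when \<open>n\<close> is odd. So \<open>a = 0\<close> resp. \<open>b = 0\<close>.
\<close>

section \<open>Pairs of orthogonal projections\<close>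

lemma orth_proj_idem: "orth_proj P \<Longrightarrow> P *v (P *v x) = P *v x"
  by (simp add: orth_proj_def matrix_vector_mul_assoc)

lemma transpose_add: "transpose (A + B) = transpose A + transpose (B :: 'a::ring_1^'n^'m)"
  by (simp add: transpose_def vec_eq_iff)

lemma symmetric_inner_commute:
  fixes M :: "real^'n^'n"
  assumes "transpose M = M"
  shows "x \<bullet> (M *v y) = (M *v x) \<bullet> y"
  by (metis assms dot_lmul_matrix vector_transpose_matrix)

lemma orth_proj_inner_commute: "orth_proj P \<Longrightarrow> x \<bullet> (P *v y) = (P *v x) \<bullet> y"
  by (simp add: orth_proj_def symmetric_inner_commute)

lemma symmetric_eigenvectors_orthogonal:
  fixes M :: "real^'n^'n"
  assumes "transpose M = M" "M *v x = a *\<^sub>R x" "M *v y = b *\<^sub>R y" "a \<noteq> b"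
  shows "x \<bullet> y = 0"
proof -
  have "a * (x \<bullet> y) = b * (x \<bullet> y)"
    using symmetric_inner_commute[OF assms(1), of x y] assms(2,3) by auto
  with assms(4) show ?thesis by auto
qed

lemma orth_proj_cross_eigen:
  fixes Q1 Q2 :: "real^'n^'n"
  assumes "orth_proj Q1" "(Q1 + Q2) *v x = \<mu> *\<^sub>R x"
  shows "Q1 *v (Q2 *v x) = (\<mu> - 1) *\<^sub>R (Q1 *v x)"
proof -
  have "Q1 *v (Q1 *v x) + Q1 *v (Q2 *v x) = \<mu> *\<^sub>R (Q1 *v x)"
    using arg_cong[OF assms(2), of "(*v) Q1"]
    by (simp add: matrix_vector_mult_add_rdistrib matrix_vector_right_distrib matrix_vector_mult_scaleR)
  then show ?thesis
    using orth_proj_idem[OF assms(1)] by (simp add: algebra_simps)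
qed

lemma orth_proj_cross_eigen':
  fixes Q1 Q2 :: "real^'n^'n"
  assumes "orth_proj Q2" "(Q1 + Q2) *v x = \<mu> *\<^sub>R x"
  shows "Q2 *v (Q1 *v x) = (\<mu> - 1) *\<^sub>R (Q2 *v x)"
  using orth_proj_cross_eigen[of Q2 Q1] assms by (simp add: add.commute)

lemma orth_proj_diff_eigen:
  fixes Q1 Q2 :: "real^'n^'n"
  assumes "orth_proj Q1" "orth_proj Q2" "(Q1 + Q2) *v x = \<mu> *\<^sub>R x"
  shows "(Q1 + Q2) *v ((Q1 - Q2) *v x) = (2 - \<mu>) *\<^sub>R ((Q1 - Q2) *v x)"
proof -
  have "(Q1 + Q2) *v ((Q1 - Q2) *v x)
      = Q1 *v (Q1 *v x) - Q1 *v (Q2 *v x) + Q2 *v (Q1 *v x) - Q2 *v (Q2 *v x)"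
    by (simp add: matrix_vector_mult_add_rdistrib matrix_vector_mult_diff_rdistrib
        matrix_vector_mult_diff_distrib)
  also have "\<dots> = Q1 *v x - (\<mu> - 1) *\<^sub>R (Q1 *v x) + (\<mu> - 1) *\<^sub>R (Q2 *v x) - Q2 *v x"
    by (simp only: orth_proj_idem assms orth_proj_cross_eigen orth_proj_cross_eigen')
  also have "\<dots> = (2 - \<mu>) *\<^sub>R ((Q1 - Q2) *v x)"
    by (simp add: matrix_vector_mult_diff_rdistrib vec_eq_iff algebra_simps)
  finally show ?thesis .
qed

lemma orth_proj_diff_square_eigen:
  fixes Q1 Q2 :: "real^'n^'n"
  assumes "orth_proj Q1" "orth_proj Q2" "(Q1 + Q2) *v x = \<mu> *\<^sub>R x"
  shows "(Q1 - Q2) *v ((Q1 - Q2) *v x) = (\<mu> * (2 - \<mu>)) *\<^sub>R x"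
proof -
  have "(Q1 - Q2) *v ((Q1 - Q2) *v x)
      = Q1 *v (Q1 *v x) - Q1 *v (Q2 *v x) - Q2 *v (Q1 *v x) + Q2 *v (Q2 *v x)"
    by (simp add: matrix_vector_mult_diff_rdistrib matrix_vector_mult_diff_distrib)
  also have "\<dots> = (2 - \<mu>) *\<^sub>R (Q1 *v x + Q2 *v x)"
    by (simp only: orth_proj_idem assms orth_proj_cross_eigen orth_proj_cross_eigen')
      (simp add: vec_eq_iff algebra_simps)
  also have "Q1 *v x + Q2 *v x = \<mu> *\<^sub>R x"
    using assms(3) by (simp add: matrix_vector_mult_add_rdistrib)
  finally show ?thesis by (simp add: mult.commute)
qed

lemma orth_proj_inner_eq_if_eigen:
  fixes Q1 Q2 :: "real^'n^'n"
  assumes "orth_proj Q1" "orth_proj Q2" "(Q1 + Q2) *v x = \<mu> *\<^sub>R x" "\<mu> \<noteq> 1"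
  shows "x \<bullet> (Q1 *v x) = x \<bullet> (Q2 *v x)"
proof -
  have "(\<mu> - 1) * (x \<bullet> (Q1 *v x)) = x \<bullet> (Q1 *v (Q2 *v x))"
    using orth_proj_cross_eigen[OF assms(1,3)] by simp
  also have "\<dots> = (Q1 *v x) \<bullet> (Q2 *v x)"
    using orth_proj_inner_commute[OF assms(1)] by simp
  also have "\<dots> = x \<bullet> (Q2 *v (Q1 *v x))"
    using orth_proj_inner_commute[OF assms(2)] by (simp add: inner_commute)
  also have "\<dots> = (\<mu> - 1) * (x \<bullet> (Q2 *v x))"
    using orth_proj_cross_eigen'[OF assms(2,3)] by simp
  finally show ?thesis
    using assms(4) by simp
qed

lemma mult_eq_half_sum_diff:
  fixes A B :: "real^'n^'n"
  shows "A *v x = (1/2) *\<^sub>R ((A + B) *v x + (A - B) *v x)"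
    and "B *v x = (1/2) *\<^sub>R ((A + B) *v x - (A - B) *v x)"
  by (simp_all add: matrix_vector_mult_add_rdistrib matrix_vector_mult_diff_rdistrib
      vec_eq_iff algebra_simps)

lemma mult_mem_subspace_if_sum_diff:
  fixes A B :: "real^'n^'n"
  assumes "subspace W" "(A + B) *v x \<in> W" "(A - B) *v x \<in> W"
  shows "A *v x \<in> W" "B *v x \<in> W"
proof -
  show "A *v x \<in> W"
    unfolding mult_eq_half_sum_diff(1)[where A = A and B = B and x = x]
    by (intro subspace_scale[OF assms(1)] subspace_add[OF assms(1)] assms(2,3))
  show "B *v x \<in> W"
    unfolding mult_eq_half_sum_diff(2)[where A = A and B = B and x = x]
    by (intro subspace_scale[OF assms(1)] subspace_diff[OF assms(1)] assms(2,3))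
qed

section \<open>Invariant subspaces and rank\<close>

lemma span_invariant_matrix:
  fixes M :: "real^'n^'n"
  assumes "\<And>y. y \<in> X \<Longrightarrow> M *v y \<in> span X" "x \<in> span X"
  shows "M *v x \<in> span X"
proof -
  have "M *v x \<in> (*v) M ` span X" using assms(2) by blast
  also have "\<dots> = span ((*v) M ` X)" by (simp add: span_linear_image)
  also have "\<dots> \<subseteq> span X" using assms(1) by (simp add: image_subset_iff span_minimal)
  finally show ?thesis .
qed

definition cirreducible :: "(real^'n^'n) set \<Rightarrow> bool" where
  "cirreducible M \<longleftrightarrow>
     (\<forall>V. csubspace V \<and> (\<forall>P\<in>M. \<forall>x\<in>V. cmat P *v x \<in> V) \<longrightarrow> V = {0} \<or> V = UNIV)"

lemma cirreducible_real_subspace: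
  fixes S :: "(real^'n) set"
  assumes "cirreducible M" "subspace S" "S \<noteq> {0}"
    and invariant: "\<And>P x. P \<in> M \<Longrightarrow> x \<in> S \<Longrightarrow> P *v x \<in> S"
  shows "S = UNIV"
proof -
  define re :: "complex^'n \<Rightarrow> real^'n" where "re x = (\<chi> i. Re (x $ i))" for x
  define im :: "complex^'n \<Rightarrow> real^'n" where "im x = (\<chi> i. Im (x $ i))" for x
  define cx :: "real^'n \<Rightarrow> complex^'n" where "cx y = (\<chi> i. complex_of_real (y $ i))" for y
  define V where "V = {x. re x \<in> S \<and> im x \<in> S}"
  have re_cmat: "re (cmat P *v x) = P *v re x" and im_cmat: "im (cmat P *v x) = P *v im x" for P x
    by (simp_all add: re_def im_def vec_eq_iff matrix_vector_mult_def cmat_def Re_sum Im_sum)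
  have "csubspace V"
    unfolding csubspace_def
  proof (intro conjI ballI allI)
    show "0 \<in> V"
      using subspace_0[OF assms(2)] by (simp add: V_def re_def im_def zero_vec_def)
  next
    fix x y assume "x \<in> V" "y \<in> V"
    moreover have "re (x + y) = re x + re y" "im (x + y) = im x + im y"
      by (simp_all add: re_def im_def vec_eq_iff)
    ultimately show "x + y \<in> V"
      using subspace_add[OF assms(2)] by (simp add: V_def)
  next
    fix c :: complex and x assume "x \<in> V"
    moreover have "re (c *s x) = Re c *\<^sub>R re x - Im c *\<^sub>R im x"
      "im (c *s x) = Re c *\<^sub>R im x + Im c *\<^sub>R re x"
      by (simp_all add: re_def im_def vec_eq_iff)
    ultimately show "c *s x \<in> V"
      using subspace_add[OF assms(2)] subspace_diff[OF assms(2)] subspace_scale[OF assms(2)]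
      by (simp add: V_def)
  qed
  moreover have "\<forall>P\<in>M. \<forall>x\<in>V. cmat P *v x \<in> V"
    using invariant by (simp add: V_def re_cmat im_cmat)
  moreover have re_cx: "re (cx y) = y" and im_cx: "im (cx y) = 0" for y
    by (simp_all add: re_def im_def cx_def vec_eq_iff)
  moreover obtain y where "y \<in> S" "y \<noteq> 0"
    using assms(3) subspace_0[OF assms(2)] by blast
  then have "cx y \<in> V" "cx y \<noteq> 0"
    using subspace_0[OF assms(2)] by (auto simp: V_def re_cx im_cx, simp add: cx_def vec_eq_iff)
  ultimately have "V = UNIV"
    using assms(1) unfolding cirreducible_def by blast
  then show ?thesis
    using re_cx by (metis (mono_tags, lifting) UNIV_I V_def mem_Collect_eq subsetI subset_antisym)
qed

lemma nonzero_if_span_range_UNIV: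
  fixes v :: "nat \<Rightarrow> 'a::euclidean_space"
  assumes "span (range v) = UNIV" "\<And>k. v k = 0 \<Longrightarrow> v (Suc k) = 0" "k < DIM('a)"
  shows "v k \<noteq> 0"
proof
  assume "v k = 0"
  then have "v (k + i) = 0" for i
    by (induction i) (simp_all add: assms(2))
  then have "v l \<in> insert 0 (v ` {..<k})" for l
    by (cases "l < k") (auto dest: le_Suc_ex simp: not_less)
  then have "range v \<subseteq> insert 0 (v ` {..<k})"
    by blast
  then have "UNIV \<subseteq> span (v ` {..<k})"
    using assms(1) by (metis span_insert_0 span_mono)
  then have "DIM('a) \<le> card (v ` {..<k})"
    by (metis dim_UNIV dim_le_card finite_imageI finite_lessThan subset_antisym top_greatest)
  also have "\<dots> \<le> k"
    using card_image_le[of "{..<k}" v] by simp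
  finally show False
    using assms(3) by simp
qed

lemma card_le_rank_if_orthogonal:
  fixes Q :: "real^'n^'m" and w :: "'i \<Rightarrow> real^'m"
  assumes nonzero: "\<And>j. j \<in> I \<Longrightarrow> w j \<noteq> 0"
    and orthogonal: "\<And>j k. j \<in> I \<Longrightarrow> k \<in> I \<Longrightarrow> j \<noteq> k \<Longrightarrow> w j \<bullet> w k = 0"
    and range: "\<And>j. j \<in> I \<Longrightarrow> w j \<in> range ((*v) Q)"
  shows "card I \<le> rank Q"
proof -
  have inj: "inj_on w I"
  proof (rule inj_onI)
    fix j k assume "j \<in> I" "k \<in> I" "w j = w k"
    show "j = k"
    proof (rule ccontr)
      assume "j \<noteq> k"
      then have "w j \<bullet> w j = 0"
        using orthogonal[OF \<open>j \<in> I\<close> \<open>k \<in> I\<close>] \<open>w j = w k\<close> by simp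
      then show False
        using nonzero[OF \<open>j \<in> I\<close>] by simp
    qed
  qed
  have "pairwise orthogonal (w ` I)"
  proof (rule pairwiseI)
    fix x y assume "x \<in> w ` I" "y \<in> w ` I" "x \<noteq> y"
    then obtain j k where "j \<in> I" "k \<in> I" "j \<noteq> k" "x = w j" "y = w k"
      by blast
    then show "orthogonal x y"
      by (simp add: orthogonal_def orthogonal)
  qed
  moreover have "0 \<notin> w ` I"
    using nonzero by force
  ultimately have "independent (w ` I)"
    by (simp add: pairwise_orthogonal_independent)
  then have "card (w ` I) \<le> dim (range ((*v) Q))"
    using range by (intro independent_card_le_dim) auto
  then show ?thesis
    by (simp add: rank_dim_range card_image[OF inj])
qed

section \<open>The alternating chain\<close>

text \<open>
  The eigenvalue of \<open>Q\<^sub>1 + Q\<^sub>2\<close> on the \<open>k\<close>-th chain vector below: starting from \<open>1\<close>, it is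
  reflected alternately by \<open>\<mu> \<mapsto> 2 - 2/n - \<mu>\<close> (a step with \<open>P\<^sub>3 - P\<^sub>4\<close>, since
  \<open>P\<^sub>3 + P\<^sub>4 = (2 - 1/n) - (Q\<^sub>1 + Q\<^sub>2)\<close>) and by \<open>\<mu> \<mapsto> 2 - \<mu>\<close> (a step with \<open>Q\<^sub>1 - Q\<^sub>2\<close>),
  cf. \<open>orth_proj_diff_eigen\<close>.
\<close>
definition chain_eigenvalue :: "nat \<Rightarrow> nat \<Rightarrow> real" where
  "chain_eigenvalue n k = (if even k then 1 + real k / real n else 1 - real (k + 1) / real n)"

lemma chain_eigenvalue_inj:
  assumes "n > 0" "chain_eigenvalue n j = chain_eigenvalue n k"
  shows "j = k"
proof -
  have "chain_eigenvalue n k \<ge> 1 \<longleftrightarrow> even k" for k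
    using assms(1) by (simp add: chain_eigenvalue_def field_simps)
  then have "even j \<longleftrightarrow> even k"
    using assms(2) by metis
  then show ?thesis
    using assms by (auto simp: chain_eigenvalue_def split: if_splits)
qed

lemma chain_eigenvalue_Suc:
  assumes "n > 0"
  shows "chain_eigenvalue n (Suc k) =
    (if even k then 2 - 2 / real n - chain_eigenvalue n k else 2 - chain_eigenvalue n k)"
  using assms by (simp add: chain_eigenvalue_def field_simps)

context
  fixes Q1 Q2 P3 P4 :: "real^'n^'n" and u :: "real^'n"
  assumes orth_proj: "orth_proj Q1" "orth_proj Q2" "orth_proj P3" "orth_proj P4"
    and sum_eq: "Q1 + Q2 + P3 + P4 = (2 - 1 / real CARD('n)) *\<^sub>R mat 1"
    and irreducible: "cirreducible {Q1, Q2, P3, P4}"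
    and seed: "Q1 *v u = u" "Q2 *v u = 0" "u \<noteq> 0"
begin

primrec chain :: "nat \<Rightarrow> real^'n" where
  "chain 0 = u"
| "chain (Suc k) = (if even k then P3 - P4 else Q1 - Q2) *v chain k"

lemma P34_mult: "(P3 + P4) *v x = (2 - 1 / real CARD('n)) *\<^sub>R x - (Q1 + Q2) *v x"
proof -
  have "(Q1 + Q2 + (P3 + P4)) *v x = (2 - 1 / real CARD('n)) *\<^sub>R x"
    using sum_eq by (simp add: add.assoc flip: scaleR_matrix_vector_assoc)
  then show ?thesis
    by (simp add: matrix_vector_mult_add_rdistrib algebra_simps)
qed

lemma chain_eigen: "(Q1 + Q2) *v chain k = chain_eigenvalue CARD('n) k *\<^sub>R chain k"
proof (induction k)
  case 0
  show ?case
    using seed by (simp add: chain_eigenvalue_def matrix_vector_mult_add_rdistrib)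
next
  case (Suc k)
  show ?case
  proof (cases "even k")
    case True
    have "(P3 + P4) *v chain k
        = (2 - 1 / real CARD('n) - chain_eigenvalue CARD('n) k) *\<^sub>R chain k"
      using Suc.IH by (simp add: P34_mult scaleR_diff_left)
    from orth_proj_diff_eigen[OF orth_proj(3,4) this]
    have P34_Suc: "(P3 + P4) *v chain (Suc k)
        = (1 / real CARD('n) + chain_eigenvalue CARD('n) k) *\<^sub>R chain (Suc k)"
      using True by simp
    have "(Q1 + Q2) *v chain (Suc k)
        = (2 - 1 / real CARD('n)) *\<^sub>R chain (Suc k) - (P3 + P4) *v chain (Suc k)"
      by (simp add: P34_mult)
    also have "\<dots>
        = (2 - 1 / real CARD('n) - (1 / real CARD('n) + chain_eigenvalue CARD('n) k)) *\<^sub>R chain (Suc k)"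
      unfolding P34_Suc by (simp only: scaleR_diff_left)
    also have "\<dots> = chain_eigenvalue CARD('n) (Suc k) *\<^sub>R chain (Suc k)"
      using True by (simp add: chain_eigenvalue_Suc)
    finally show ?thesis .
  next
    case False
    then show ?thesis
      using orth_proj_diff_eigen[OF orth_proj(1,2) Suc.IH] by (simp add: chain_eigenvalue_Suc)
  qed
qed

lemma chain_eigen_P34:
  "(P3 + P4) *v chain k = (2 - 1 / real CARD('n) - chain_eigenvalue CARD('n) k) *\<^sub>R chain k"
  by (simp add: P34_mult chain_eigen scaleR_diff_left)

lemma chain_orthogonal:
  assumes "j \<noteq> k"
  shows "chain j \<bullet> chain k = 0"
proof (rule symmetric_eigenvectors_orthogonal[OF _ chain_eigen chain_eigen])
  show "transpose (Q1 + Q2) = Q1 + Q2"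
    using orth_proj(1,2) by (simp add: transpose_add orth_proj_def)
  show "chain_eigenvalue CARD('n) j \<noteq> chain_eigenvalue CARD('n) k"
    using chain_eigenvalue_inj[of "CARD('n)" j k] assms by auto
qed

lemma chain_mem_span: "chain k \<in> span (range chain)"
  by (simp add: span_base)

lemma diff_chain_mem_span:
  "(Q1 - Q2) *v chain k \<in> span (range chain) \<and> (P3 - P4) *v chain k \<in> span (range chain)"
proof (cases k)
  case 0
  then show ?thesis
    using seed chain_mem_span[of 0] chain_mem_span[of 1] by (simp add: matrix_vector_mult_diff_rdistrib)
next
  case (Suc j)
  have "(Q1 - Q2) *v ((Q1 - Q2) *v chain j) \<in> span (range chain)"
    "(P3 - P4) *v ((P3 - P4) *v chain j) \<in> span (range chain)"
    using orth_proj_diff_square_eigen[OF orth_proj(1,2) chain_eigen]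
      orth_proj_diff_square_eigen[OF orth_proj(3,4) chain_eigen_P34]
    by (simp_all add: span_scale chain_mem_span)
  then show ?thesis
    using chain_mem_span[of "Suc k"] by (cases "even j") (simp_all add: Suc)
qed

lemma proj_chain_mem_span:
  assumes "P \<in> {Q1, Q2, P3, P4}"
  shows "P *v chain k \<in> span (range chain)"
proof -
  have "(Q1 + Q2) *v chain k \<in> span (range chain)" "(P3 + P4) *v chain k \<in> span (range chain)"
    by (simp_all add: chain_eigen chain_eigen_P34 span_scale chain_mem_span)
  then show ?thesis
    using assms diff_chain_mem_span[of k]
      mult_mem_subspace_if_sum_diff[OF subspace_span, where A = Q1 and B = Q2]
      mult_mem_subspace_if_sum_diff[OF subspace_span, where A = P3 and B = P4]
    by blast
qed

lemma span_chain: "span (range chain) = UNIV"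
proof (rule cirreducible_real_subspace[OF irreducible subspace_span])
  show "span (range chain) \<noteq> {0}"
    using chain_mem_span[of 0] seed(3) by auto
  show "P *v x \<in> span (range chain)" if "P \<in> {Q1, Q2, P3, P4}" "x \<in> span (range chain)" for P x
    using span_invariant_matrix[OF _ that(2)] proj_chain_mem_span[OF that(1)] by blast
qed

lemma chain_nonzero:
  assumes "k < CARD('n)"
  shows "chain k \<noteq> 0"
  using nonzero_if_span_range_UNIV[OF span_chain _] assms by simp

lemma Q1_chain_after_odd:
  assumes "odd k"
  obtains c where "Q1 *v chain (Suc k)
    = (chain_eigenvalue CARD('n) (Suc k) / 2) *\<^sub>R chain (Suc k) + c *\<^sub>R chain k"
proof
  have "Q1 *v chain (Suc k) = (1/2) *\<^sub>R ((Q1 + Q2) *v chain (Suc k) + (Q1 - Q2) *v chain (Suc k))"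
    by (rule mult_eq_half_sum_diff)
  also have "(Q1 - Q2) *v chain (Suc k) = (Q1 - Q2) *v ((Q1 - Q2) *v chain k)"
    using assms by simp
  finally have "Q1 *v chain (Suc k)
      = (1/2) *\<^sub>R ((Q1 + Q2) *v chain (Suc k) + (Q1 - Q2) *v ((Q1 - Q2) *v chain k))" .
  then show "Q1 *v chain (Suc k) = (chain_eigenvalue CARD('n) (Suc k) / 2) *\<^sub>R chain (Suc k)
      + (chain_eigenvalue CARD('n) k * (2 - chain_eigenvalue CARD('n) k) / 2) *\<^sub>R chain k"
    unfolding chain_eigen orth_proj_diff_square_eigen[OF orth_proj(1,2) chain_eigen]
    by (simp only: scaleR_add_right scaleR_scaleR) (simp add: ac_simps)
qed

lemma Q1_chain_even_nonzero:
  assumes "2 * j < CARD('n)"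
  shows "Q1 *v chain (2 * j) \<noteq> 0"
proof (cases j)
  case 0
  then show ?thesis
    using seed by simp
next
  case (Suc i)
  define k where "k = 2 * i + 1"
  have "odd k" "2 * j = Suc k"
    by (simp_all add: k_def Suc)
  obtain c where Q1_chain: "Q1 *v chain (Suc k)
    = (chain_eigenvalue CARD('n) (Suc k) / 2) *\<^sub>R chain (Suc k) + c *\<^sub>R chain k"
    using Q1_chain_after_odd[OF \<open>odd k\<close>] .
  have inner_Q1_chain: "chain (Suc k) \<bullet> (Q1 *v chain (Suc k))
      = chain_eigenvalue CARD('n) (Suc k) / 2 * (chain (Suc k) \<bullet> chain (Suc k))"
    using chain_orthogonal[of "Suc k" k] by (simp add: Q1_chain inner_add_right del: chain.simps)
  have "chain_eigenvalue CARD('n) (Suc k) > 0"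
    using \<open>odd k\<close> by (simp add: chain_eigenvalue_def add_pos_nonneg)
  moreover have "chain (Suc k) \<noteq> 0"
    using chain_nonzero[of "Suc k"] assms \<open>2 * j = Suc k\<close> by (simp del: chain.simps)
  then have "chain (Suc k) \<bullet> chain (Suc k) > 0"
    by (simp del: chain.simps)
  ultimately have "chain (Suc k) \<bullet> (Q1 *v chain (Suc k)) > 0"
    unfolding inner_Q1_chain by simp
  then show ?thesis
    using \<open>2 * j = Suc k\<close> by (auto simp del: chain.simps)
qed

lemma Q1_chain_even_orthogonal:
  assumes "i \<noteq> j"
  shows "(Q1 *v chain (2 * i)) \<bullet> (Q1 *v chain (2 * j)) = 0"
proof -
  have "(Q1 *v chain (2 * i)) \<bullet> (Q1 *v chain (2 * j)) = chain (2 * i) \<bullet> (Q1 *v chain (2 * j))"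
    using orth_proj_inner_commute[OF orth_proj(1)] orth_proj_idem[OF orth_proj(1)] by metis
  also have "\<dots> = 0"
  proof (cases j)
    case 0
    then show ?thesis
      using seed chain_orthogonal[of "2 * i" 0] assms by simp
  next
    case (Suc j')
    define k where "k = 2 * j' + 1"
    have "odd k" "2 * j = Suc k" "2 * i \<noteq> Suc k" "2 * i \<noteq> k"
      using assms by (simp_all add: k_def Suc)
    obtain c where "Q1 *v chain (Suc k)
      = (chain_eigenvalue CARD('n) (Suc k) / 2) *\<^sub>R chain (Suc k) + c *\<^sub>R chain k"
      using Q1_chain_after_odd[OF \<open>odd k\<close>] .
    then show ?thesis
      using chain_orthogonal[OF \<open>2 * i \<noteq> Suc k\<close>] chain_orthogonal[OF \<open>2 * i \<noteq> k\<close>]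
        \<open>2 * j = Suc k\<close> by (simp add: inner_add_right del: chain.simps)
  qed
  finally show ?thesis .
qed

lemma rank_Q1_lower_bound: "(CARD('n) - 1) div 2 + 1 \<le> rank Q1"
proof -
  have "card {..(CARD('n) - 1) div 2} \<le> rank Q1"
  proof (rule card_le_rank_if_orthogonal[where w = "\<lambda>j. Q1 *v chain (2 * j)"])
    have "2 * j < CARD('n)" if "j \<le> (CARD('n) - 1) div 2" for j
      using that zero_less_card_finite[where 'a='n] by presburger
    then show "Q1 *v chain (2 * j) \<noteq> 0" if "j \<in> {..(CARD('n) - 1) div 2}" for j
      using that by (simp add: Q1_chain_even_nonzero)
    show "(Q1 *v chain (2 * j)) \<bullet> (Q1 *v chain (2 * k)) = 0" if "j \<noteq> k" for j k
      using that by (rule Q1_chain_even_orthogonal)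
    show "Q1 *v chain (2 * j) \<in> range ((*v) Q1)" for j
      by (rule rangeI)
  qed
  then show ?thesis
    by simp
qed

end

lemma rank_lower_bound_if_eigenvalue_one:
  fixes Q1 Q2 P3 P4 :: "real^'n^'n"
  assumes "orth_proj Q1" "orth_proj Q2" "orth_proj P3" "orth_proj P4"
    and "Q1 + Q2 + P3 + P4 = (2 - 1 / real CARD('n)) *\<^sub>R mat 1"
    and "cirreducible {Q1, Q2, P3, P4}"
    and "(Q1 + Q2) *v x = x" "Q1 *v x \<noteq> 0"
  shows "(CARD('n) - 1) div 2 + 1 \<le> rank Q1"
proof -
  have "Q2 *v (Q1 *v x) = 0"
    using orth_proj_cross_eigen'[OF assms(2), of Q1 x 1] assms(7) by simp
  then show ?thesis
    using assms orth_proj_idem[OF assms(1)]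
    by (intro rank_Q1_lower_bound[of Q1 Q2 P3 P4 "Q1 *v x"])
qed

lemma frakP_quadruple_P12_eigen:
  fixes P1 P2 P3 P4 :: "real^'n^'n"
  assumes "frakP_quadruple P1 P2 P3 P4" "(P3 + P4) *v e = lam *\<^sub>R e"
  shows "(P1 + P2) *v e = (2 - 1 / real CARD('n) - lam) *\<^sub>R e"
proof -
  have "(P1 + P2 + (P3 + P4)) *v e = (2 - 1 / real CARD('n)) *\<^sub>R e"
    using assms(1) by (simp add: frakP_quadruple_def add.assoc flip: scaleR_matrix_vector_assoc)
  then have "(P1 + P2) *v e + lam *\<^sub>R e = (2 - 1 / real CARD('n)) *\<^sub>R e"
    using assms(2) by (simp only: matrix_vector_mult_add_rdistrib[of "P1 + P2"])
  then show ?thesis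
    by (simp add: scaleR_diff_left eq_diff_eq)
qed

lemma frakP_quadruple_even_P1_vanishes:
  fixes P1 P2 P3 P4 :: "real^'n^'n"
  assumes "frakP_quadruple P1 P2 P3 P4" "(P1 + P2) *v e = e" "even CARD('n)"
  shows "P1 *v e = 0"
proof (rule ccontr)
  assume "P1 *v e \<noteq> 0"
  with assms(1,2) have "(CARD('n) - 1) div 2 + 1 \<le> rank P1"
    by (intro rank_lower_bound_if_eigenvalue_one[of P1 P2 P3 P4])
      (auto simp: frakP_quadruple_def cirreducible_def)
  moreover have "int (rank P1) = int CARD('n) div 2 - 1"
    using assms(1,3) by (simp add: frakP_quadruple_def)
  ultimately show False
    using assms(3) by presburger
qed

lemma frakP_quadruple_odd_P2_vanishes:
  fixes P1 P2 P3 P4 :: "real^'n^'n"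
  assumes "frakP_quadruple P1 P2 P3 P4" "(P1 + P2) *v e = e" "odd CARD('n)"
  shows "P2 *v e = 0"
proof (rule ccontr)
  assume "P2 *v e \<noteq> 0"
  moreover have "(P2 + P1) *v e = e"
    using assms(2) by (simp add: add.commute)
  ultimately have "(CARD('n) - 1) div 2 + 1 \<le> rank P2"
    using assms(1) by (intro rank_lower_bound_if_eigenvalue_one[of P2 P1 P3 P4])
      (auto simp: frakP_quadruple_def cirreducible_def add_ac insert_commute)
  with assms(1,3) show False
    by (simp add: frakP_quadruple_def) presburger
qed

theorem proposition4p5:
  fixes P1 P2 P3 P4 :: "real^'n^'n" and lam :: real and e :: "real^'n"
  assumes "frakP_quadruple P1 P2 P3 P4"
    and "(P3 + P4) *v e = lam *\<^sub>R e"
    and "norm e = 1"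
  shows "(lam \<noteq> 1 - 1 / real CARD('n) \<longrightarrow>
            e \<bullet> (P1 *v e) = 1 - 1 / (2 * real CARD('n)) - lam / 2 \<and>
            e \<bullet> (P2 *v e) = 1 - 1 / (2 * real CARD('n)) - lam / 2)
       \<and> (lam = 1 - 1 / real CARD('n) \<longrightarrow>
            (even CARD('n) \<longrightarrow> e \<bullet> (P1 *v e) = 0 \<and> e \<bullet> (P2 *v e) = 1) \<and>
            (odd CARD('n) \<longrightarrow> e \<bullet> (P1 *v e) = 1 \<and> e \<bullet> (P2 *v e) = 0))"
proof -
  define \<mu> where "\<mu> = 2 - 1 / real CARD('n) - lam"
  have eigen: "(P1 + P2) *v e = \<mu> *\<^sub>R e"
    unfolding \<mu>_def using frakP_quadruple_P12_eigen[OF assms(1,2)] .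
  have "e \<bullet> e = 1"
    using assms(3) by (simp add: dot_square_norm)
  with eigen have sum_inner: "e \<bullet> (P1 *v e) + e \<bullet> (P2 *v e) = \<mu>"
    by (simp add: matrix_vector_mult_add_rdistrib flip: inner_add_right)
  have proj: "orth_proj P1" "orth_proj P2"
    using assms(1) by (simp_all add: frakP_quadruple_def)
  have generic: "e \<bullet> (P1 *v e) = \<mu> / 2 \<and> e \<bullet> (P2 *v e) = \<mu> / 2" if "\<mu> \<noteq> 1"
    using orth_proj_inner_eq_if_eigen[OF proj eigen that] sum_inner by linarith
  have eigen_one: "(P1 + P2) *v e = e" if "\<mu> = 1"
    using eigen that by simp
  have even: "e \<bullet> (P1 *v e) = 0 \<and> e \<bullet> (P2 *v e) = 1" if "\<mu> = 1" "even CARD('n)"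
    using frakP_quadruple_even_P1_vanishes[OF assms(1) eigen_one[OF that(1)] that(2)] sum_inner that(1)
    by simp
  have odd: "e \<bullet> (P1 *v e) = 1 \<and> e \<bullet> (P2 *v e) = 0" if "\<mu> = 1" "odd CARD('n)"
    using frakP_quadruple_odd_P2_vanishes[OF assms(1) eigen_one[OF that(1)] that(2)] sum_inner that(1)
    by simp
  have lam_iff: "lam = 1 - 1 / real CARD('n) \<longleftrightarrow> \<mu> = 1"
    by (auto simp: \<mu>_def)
  have half: "1 - 1 / (2 * real CARD('n)) - lam / 2 = \<mu> / 2"
    by (simp add: \<mu>_def field_simps)
  show ?thesis
    unfolding lam_iff half using generic even odd by blast
qed

end
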